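(* Let $A$ be the adjacency matrix of a regular network, let $\lambda$ be an eigenvalue of $A$ with $l$-dimensional generalized eigenspace $G_\lambda$ ($l\ge 1$), and for each positive integer $j$ set $N^j=\operatorname{Ker}(A-\lambda I)\cap\operatorname{Im}(A-\lambda I)^{j-1}$. Then for every $1\le k\le l$ and every one-dimensional subspace $J_1$ of $N^k$ which is special in $N^k$, there exists a $k$-dimensional special Jordan subspace to the network (contained in $G_\lambda$) that contains $J_1$.
   Context: A regular network is a finite directed graph on cells $1,\dots,n$ (loops and multiple arrows allowed) in which every cell receives the same number $v$ of arrows (the valency). Its adjacency matrix $A=[a_{ij}]$ has $a_{ij}$ equal to the number of arrows cell $i$ receives from cell $j$; every row sum is $v$. $A$ acts on $\mathbb{C}^n$. A polydiagonal is a subspace of $\mathbb{C}^n$ of the form $\{x : x_i=x_j \text{ for all } (i,j)\in R\}$ for some (possibly empty) set $R$ of index pairs. $F=\{x_1=\cdots=x_n\}$ is the fully synchrony subspace. $P(W)$ is the smallest polydiagonal containing a subspace $W$. For a subspace $E\subseteq\mathbb{C}^n$, a subspace $W\subseteq E$ is special in $E$ if for every subspace $U\subseteq E$ with $\dim U=\dim W$ and $P(U)\subseteq P(W)$ one has $P(U)=P(W)$. The generalized eigenspace of $\lambda$ is $G_\lambda=\operatorname{Ker}(A-\lambda I)^p$ for $p$ large. A Jordan chain of length $k$ for $\lambda$ is a sequence of nonzero vectors $x_1,\dots,x_k$ with $(A-\lambda I)x_1=0$ and $(A-\lambda I)x_i=x_{i-1}$ for $2\le i\le k$; a Jordan subspace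 is the span of a Jordan chain. A Jordan subspace $W$ of a generalized eigenspace $G$ is a special Jordan subspace to the network if for every Jordan subspace $U$ of $G$ with $\dim U=\dim W$ and $P(U)\subseteq P(W)$, either $P(U)=P(W)$ or $U=F$. *)

theory Defs
  imports "HOL-Analysis.Analysis"
begin

text \<open>Networks on a finite set of cells, indexed by a finite type 'n; vectors in C^n are
  complex^'n; subspaces, spans and dimensions are complex-linear (the vec interpretation).\<close>

definition regular_network :: "nat^'n^'n \<Rightarrow> bool" where
  "regular_network A \<longleftrightarrow> (\<exists>v::nat. \<forall>i. (\<Sum>j\<in>UNIV. A$i$j) = v)"

definition cmat :: "nat^'n^'n \<Rightarrow> complex^'n^'n" where
  "cmat A = (\<chi> i j. of_nat (A$i$j))"

definition shifted :: "nat^'n^'n \<Rightarrow> complex \<Rightarrow> complex^'n \<Rightarrow> complex^'n" where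
  "shifted A lam x = cmat A *v x - lam *s x"

definition polydiagonal_of :: "('n \<times> 'n) set \<Rightarrow> (complex^'n) set" where
  "polydiagonal_of R = {x. \<forall>(i,j)\<in>R. x$i = x$j}"

definition is_polydiagonal :: "(complex^'n) set \<Rightarrow> bool" where
  "is_polydiagonal S \<longleftrightarrow> (\<exists>R. S = polydiagonal_of R)"

definition polyP :: "(complex^'n) set \<Rightarrow> (complex^'n) set" where
  "polyP W = \<Inter>{S. is_polydiagonal S \<and> W \<subseteq> S}"

definition full_sync :: "(complex^'n) set" where
  "full_sync = {x. \<forall>i j. x$i = x$j}"

definition special_in :: "(complex^'n) set \<Rightarrow> (complex^'n) set \<Rightarrow> bool" where
  "special_in E W \<longleftrightarrow> vec.subspace W \<and> W \<subseteq> E \<and>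
     (\<forall>U. vec.subspace U \<and> U \<subseteq> E \<and> vec.dim U = vec.dim W \<and> polyP U \<subseteq> polyP W
          \<longrightarrow> polyP U = polyP W)"

definition gen_eigenspace :: "nat^'n^'n \<Rightarrow> complex \<Rightarrow> (complex^'n) set" where
  "gen_eigenspace A lam = {x. \<exists>p. (shifted A lam ^^ p) x = 0}"

definition Nspace :: "nat^'n^'n \<Rightarrow> complex \<Rightarrow> nat \<Rightarrow> (complex^'n) set" where
  "Nspace A lam j = {x. shifted A lam x = 0} \<inter> range (shifted A lam ^^ (j - 1))"

text \<open>Jordan chain x_1,...,x_k given as the list [x_1,...,x_k].\<close>
definition jordan_chain :: "nat^'n^'n \<Rightarrow> complex \<Rightarrow> (complex^'n) list \<Rightarrow> bool" where
  "jordan_chain A lam xs \<longleftrightarrow> xs \<noteq> [] \<and> (\<forall>x\<in>set xs. x \<noteq> 0) \<and>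
     shifted A lam (xs ! 0) = 0 \<and>
     (\<forall>i. 0 < i \<and> i < length xs \<longrightarrow> shifted A lam (xs ! i) = xs ! (i - 1))"

definition jordan_subspace :: "nat^'n^'n \<Rightarrow> complex \<Rightarrow> (complex^'n) set \<Rightarrow> bool" where
  "jordan_subspace A lam W \<longleftrightarrow> (\<exists>xs. jordan_chain A lam xs \<and> W = vec.span (set xs))"

definition special_jordan_subspace :: "nat^'n^'n \<Rightarrow> complex \<Rightarrow> (complex^'n) set \<Rightarrow> bool" where
  "special_jordan_subspace A lam W \<longleftrightarrow> jordan_subspace A lam W \<and>
     (\<forall>U. jordan_subspace A lam U \<and> vec.dim U = vec.dim W \<and> polyP U \<subseteq> polyP W
          \<longrightarrow> polyP U = polyP W \<or> U = full_sync)"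

end

theory Submission
  imports Defs
begin

text \<open>Write \<open>B = A - \<lambda>I\<close> and let \<open>x \<noteq> 0\<close> span \<open>J\<^sub>1\<close>. Since \<open>x \<in> N\<^sup>k\<close>, we have \<open>x = B\<^sup>k\<^sup>-\<^sup>1 y\<close> for some \<open>y\<close>;
  choose \<open>y\<close> so that the polydiagonal \<open>P(W)\<close> of the Krylov space \<open>W = span {y, By, ..., B\<^sup>k\<^sup>-\<^sup>1 y}\<close>
  has least dimension. Then \<open>W\<close> is a \<open>k\<close>-dimensional Jordan subspace containing \<open>J\<^sub>1\<close>.
  If a \<open>k\<close>-dimensional Jordan subspace \<open>U\<close> had \<open>P(U) \<subset> P(W)\<close>, it would contain a vector
  \<open>w\<close> with \<open>B\<^sup>k w = 0\<close> and \<open>u = B\<^sup>k\<^sup>-\<^sup>1 w \<noteq> 0\<close>. Either \<open>u\<close> breaks a synchrony \<open>x\<^sub>i = x\<^sub>j\<close> of \<open>x\<close>: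
  then adding suitable multiples of \<open>B\<^sup>m w\<close>, \<open>m \<ge> 1\<close>, to \<open>y\<close> makes the whole chain satisfy it,
  which shrinks the polydiagonal strictly. Or \<open>u \<in> P(x)\<close>: then specialness of \<open>J\<^sub>1\<close> in \<open>N\<^sup>k\<close>
  forces \<open>u = c x\<close>, and \<open>w / c\<close> is a preimage of \<open>x\<close> whose Krylov space lies in \<open>U\<close>. Both
  contradict minimality.\<close>

definition krylov :: "('a \<Rightarrow> 'a) \<Rightarrow> 'a \<Rightarrow> nat \<Rightarrow> 'a set" where
  "krylov f y k = (\<lambda>t. (f ^^ t) y) ` {..<k}"

lemma finite_krylov [simp]: "finite (krylov f y k)"
  by (simp add: krylov_def)

lemma iterate_in_krylov: "t < k \<Longrightarrow> (f ^^ t) y \<in> krylov f y k"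
  by (simp add: krylov_def)

lemma krylov_Suc: "krylov f y (Suc k) = insert y (krylov f (f y) k)"
  unfolding krylov_def lessThan_Suc_eq_insert_0 image_insert image_image
  by (simp add: funpow_Suc_right del: funpow.simps)

lemma funpow_eq_apply_pred: "1 \<le> k \<Longrightarrow> (f ^^ k) y = f ((f ^^ (k - 1)) y)"
  by (cases k) auto

context
  fixes f :: "'a::field ^ 'n \<Rightarrow> 'a ^ 'n"
  assumes linear_f: "Vector_Spaces.linear (*s) (*s) f"
begin

lemma linear_iterate: "Vector_Spaces.linear (*s) (*s) (f ^^ t)"
proof (induction t)
  case 0
  show ?case by (simp add: vec.linear_ident)
next
  case (Suc t)
  show ?case
    unfolding funpow.simps(2) by (rule Vector_Spaces.linear_compose[OF Suc.IH linear_f])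
qed

lemmas iterate_zero [simp] = vec.linear_0[OF linear_iterate]
  and iterate_add = vec.linear_add[OF linear_iterate]
  and iterate_scale = vec.linear_scale[OF linear_iterate]

lemma iterate_vanish_mono:
  assumes "(f ^^ k) x = 0" "k \<le> q"
  shows "(f ^^ q) x = 0"
proof -
  have "(f ^^ (q - k)) ((f ^^ k) x) = (f ^^ (q - k + k)) x"
    by (simp add: funpow_add)
  then show ?thesis using assms by simp
qed

lemma span_krylov_subset_kernel:
  assumes "(f ^^ m) y = 0"
  shows "vec.span (krylov f y k) \<subseteq> {v. (f ^^ m) v = 0}"
proof (rule vec.span_minimal[OF _ vec.linear_subspace_kernel[OF linear_iterate]])
  show "krylov f y k \<subseteq> {v. (f ^^ m) v = 0}"
  proof
    fix v assume "v \<in> krylov f y k"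
    then obtain t where "v = (f ^^ t) y" unfolding krylov_def by auto
    then have "(f ^^ m) v = (f ^^ (m + t)) y" by (simp add: funpow_add)
    then show "v \<in> {v. (f ^^ m) v = 0}" using iterate_vanish_mono[OF assms] by simp
  qed
qed

lemma krylov_independent:
  assumes "(f ^^ k) y \<noteq> 0" "(f ^^ Suc k) y = 0"
  shows "vec.independent (krylov f y (Suc k)) \<and> card (krylov f y (Suc k)) = Suc k"
  using assms
proof (induction k arbitrary: y)
  case 0
  have "krylov f y (Suc 0) = {y}" by (auto simp: krylov_def)
  then show ?case using 0 by (simp add: vec.independent_insert)
next
  case (Suc k)
  have "(f ^^ k) (f y) \<noteq> 0" "(f ^^ Suc k) (f y) = 0"
    using Suc.prems by (simp_all add: funpow_Suc_right del: funpow.simps)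
  note IH = Suc.IH[OF this]
  have "y \<notin> vec.span (krylov f (f y) (Suc k))"
    using span_krylov_subset_kernel[of "Suc k" "f y"] Suc.prems
    by (auto simp: funpow_Suc_right simp del: funpow.simps)
  moreover have "y \<notin> krylov f (f y) (Suc k)"
    using calculation vec.span_superset by blast
  ultimately show ?case using IH by (simp add: krylov_Suc vec.independent_insert)
qed

lemma dim_span_krylov:
  assumes "1 \<le> k" "(f ^^ (k - 1)) y \<noteq> 0" "(f ^^ k) y = 0"
  shows "vec.dim (vec.span (krylov f y k)) = k"
proof -
  obtain k' where k: "k = Suc k'" using assms(1) by (cases k) auto
  show ?thesis
    using krylov_independent[of k' y] assms unfolding k by (simp add: vec.dim_eq_card_independent)
qed

lemma equalize_coords_step:
  assumes S: "vec.subspace S" and Y: "\<And>t. (f ^^ t) Y \<in> S" and w: "\<And>t. (f ^^ t) w \<in> S"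
    and wk: "(f ^^ k) w = 0" and wij: "(f ^^ (k - 1)) w $ i \<noteq> (f ^^ (k - 1)) w $ j"
    and T: "Suc T < k"
    and Yij: "\<And>t. Suc T \<le> t \<Longrightarrow> t < k \<Longrightarrow> (f ^^ t) Y $ i = (f ^^ t) Y $ j"
  shows "\<exists>Y'. (\<forall>t. (f ^^ t) Y' \<in> S) \<and> (f ^^ (k - 1)) Y' = (f ^^ (k - 1)) Y \<and>
    (\<forall>t. T \<le> t \<and> t < k \<longrightarrow> (f ^^ t) Y' $ i = (f ^^ t) Y' $ j)"
proof -
  define m where "m = k - 1 - T"
  define d where "d = (f ^^ T) Y $ i - (f ^^ T) Y $ j"
  define e where "e = (f ^^ (k - 1)) w $ i - (f ^^ (k - 1)) w $ j"
  define Y' where "Y' = Y + (- d / e) *s (f ^^ m) w"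
  have Y'_iterate: "(f ^^ t) Y' = (f ^^ t) Y + (- d / e) *s (f ^^ (t + m)) w" for t
    unfolding Y'_def iterate_add iterate_scale by (simp add: funpow_add)
  have high: "(f ^^ (t + m)) w = 0" if "T < t" for t
    using iterate_vanish_mono[OF wk] that T unfolding m_def by simp
  show ?thesis
  proof (intro exI[of _ Y'] conjI allI impI)
    show "(f ^^ t) Y' \<in> S" for t
      unfolding Y'_iterate using Y w S by (intro vec.subspace_add vec.subspace_scale) auto
    show "(f ^^ (k - 1)) Y' = (f ^^ (k - 1)) Y"
      unfolding Y'_iterate using high[of "k - 1"] T by simp
    fix t assume t: "T \<le> t \<and> t < k"
    show "(f ^^ t) Y' $ i = (f ^^ t) Y' $ j"
    proof (cases "t = T")
      case True
      have "e \<noteq> 0" using wij unfolding e_def by simp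
      moreover have "T + m = k - 1" using T unfolding m_def by simp
      ultimately show ?thesis
        unfolding Y'_iterate True d_def e_def by (simp add: field_simps)
    next
      case False
      then show ?thesis unfolding Y'_iterate using high Yij t by simp
    qed
  qed
qed

lemma equalize_coords:
  assumes S: "vec.subspace S" and y: "\<And>t. (f ^^ t) y \<in> S" and w: "\<And>t. (f ^^ t) w \<in> S"
    and wk: "(f ^^ k) w = 0" and wij: "(f ^^ (k - 1)) w $ i \<noteq> (f ^^ (k - 1)) w $ j"
    and yij: "(f ^^ (k - 1)) y $ i = (f ^^ (k - 1)) y $ j"
  shows "\<exists>Y. (\<forall>t. (f ^^ t) Y \<in> S) \<and> (f ^^ (k - 1)) Y = (f ^^ (k - 1)) y \<and>
    (\<forall>t<k. (f ^^ t) Y $ i = (f ^^ t) Y $ j)"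
proof -
  have "\<exists>Y. (\<forall>t. (f ^^ t) Y \<in> S) \<and> (f ^^ (k - 1)) Y = (f ^^ (k - 1)) y \<and>
      (\<forall>t. k - 1 - n \<le> t \<and> t < k \<longrightarrow> (f ^^ t) Y $ i = (f ^^ t) Y $ j)" if "n < k" for n
    using that
  proof (induction n)
    case 0
    have "t = k - 1" if "k - 1 \<le> t" "t < k" for t using that by arith
    then show ?case using y yij by (intro exI[of _ y]) auto
  next
    case (Suc n)
    then obtain Y where Y: "\<forall>t. (f ^^ t) Y \<in> S" "(f ^^ (k - 1)) Y = (f ^^ (k - 1)) y"
      "\<forall>t. k - 1 - n \<le> t \<and> t < k \<longrightarrow> (f ^^ t) Y $ i = (f ^^ t) Y $ j" by auto
    have "Suc (k - 1 - Suc n) = k - 1 - n" "Suc (k - 1 - Suc n) < k" using Suc.prems by auto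
    then show ?case
      using equalize_coords_step[OF S _ w wk wij, of Y "k - 1 - Suc n"] Y by auto
  qed
  from this[of "k - 1"] show ?thesis
    using y by (cases k) auto
qed

end

lemma polyP_eq: "polyP S = {w. \<forall>i j. (\<forall>v\<in>S. v$i = v$j) \<longrightarrow> w$i = w$j}"
proof
  let ?R = "{(i,j). \<forall>v\<in>S. v$i = v$j}"
  have "polydiagonal_of ?R = {w. \<forall>i j. (\<forall>v\<in>S. v$i = v$j) \<longrightarrow> w$i = w$j}"
    unfolding polydiagonal_of_def by auto
  moreover have "is_polydiagonal (polydiagonal_of ?R)" unfolding is_polydiagonal_def by blast
  moreover have "S \<subseteq> polydiagonal_of ?R" unfolding polydiagonal_of_def by auto
  ultimately show "polyP S \<subseteq> {w. \<forall>i j. (\<forall>v\<in>S. v$i = v$j) \<longrightarrow> w$i = w$j}"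
    unfolding polyP_def by (metis (no_types, lifting) Inter_lower mem_Collect_eq)
next
  show "{w. \<forall>i j. (\<forall>v\<in>S. v$i = v$j) \<longrightarrow> w$i = w$j} \<subseteq> polyP S"
  proof (unfold polyP_def, rule Inter_greatest)
    fix X assume "X \<in> {S'. is_polydiagonal S' \<and> S \<subseteq> S'}"
    then obtain R where X: "X = polydiagonal_of R" "S \<subseteq> X" unfolding is_polydiagonal_def by auto
    then have "\<forall>(i,j)\<in>R. \<forall>v\<in>S. v$i = v$j" unfolding polydiagonal_of_def by auto
    then show "{w. \<forall>i j. (\<forall>v\<in>S. v$i = v$j) \<longrightarrow> w$i = w$j} \<subseteq> X"
      unfolding X(1) polydiagonal_of_def by auto
  qed
qed

lemma polyP_superset: "S \<subseteq> polyP S"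
  by (auto simp: polyP_eq)

lemma subspace_polyP: "vec.subspace (polyP S)"
  unfolding polyP_eq vec.subspace_def by auto metis

lemma polyP_minimal: "T \<subseteq> polyP S \<Longrightarrow> polyP T \<subseteq> polyP S"
  by (auto simp: polyP_eq subset_iff)

lemma polyP_subset_diagonal: "T \<subseteq> {z. z$i = z$j} \<Longrightarrow> polyP T \<subseteq> {z. z$i = z$j}"
  by (auto simp: polyP_eq)

lemma polyP_span [simp]: "polyP (vec.span S) = polyP S"
proof -
  have "(\<forall>v\<in>vec.span S. v$i = v$j) \<longleftrightarrow> (\<forall>v\<in>S. v$i = v$j)" for i j
  proof
    assume "\<forall>v\<in>S. v$i = v$j"
    moreover have "vec.subspace {z :: complex^'a. z$i = z$j}" by (auto simp: vec.subspace_def)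
    ultimately show "\<forall>v\<in>vec.span S. v$i = v$j"
      using vec.span_minimal[of S "{z. z$i = z$j}"] by auto
  qed (use vec.span_superset in auto)
  then show ?thesis by (simp add: polyP_eq)
qed

lemma dim_polyP_psubset: "polyP S \<subset> polyP T \<Longrightarrow> vec.dim (polyP S) < vec.dim (polyP T)"
  by (rule vec.dim_psubset) (simp add: subspace_polyP vec.span_eq_iff[THEN iffD2])

context
  fixes f :: "complex ^ 'n \<Rightarrow> complex ^ 'n"
  assumes linear_f: "Vector_Spaces.linear (*s) (*s) f"
begin

lemma iterate_in_polyP_krylov:
  assumes "(f ^^ k) y = 0"
  shows "(f ^^ t) y \<in> polyP (krylov f y k)"
proof (cases "t < k")
  case True
  then have "(f ^^ t) y \<in> krylov f y k" by (rule iterate_in_krylov)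
  then show ?thesis using polyP_superset by blast
next
  case False
  then have "(f ^^ t) y = 0" using iterate_vanish_mono[OF linear_f assms] by simp
  then show ?thesis by (simp add: vec.subspace_0 subspace_polyP)
qed

lemma polyP_krylov_shrinks_by_equalizing:
  assumes y: "(f ^^ k) y = 0" and w: "\<And>t. (f ^^ t) w \<in> polyP (krylov f y k)" "(f ^^ k) w = 0"
    and wij: "(f ^^ (k - 1)) w $ i \<noteq> (f ^^ (k - 1)) w $ j"
    and yij: "(f ^^ (k - 1)) y $ i = (f ^^ (k - 1)) y $ j"
  shows "\<exists>Y. (f ^^ (k - 1)) Y = (f ^^ (k - 1)) y \<and> polyP (krylov f Y k) \<subset> polyP (krylov f y k)"
proof -
  let ?P = "polyP (krylov f y k)"
  obtain Y where Y: "\<forall>t. (f ^^ t) Y \<in> ?P" "(f ^^ (k - 1)) Y = (f ^^ (k - 1)) y"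
      "\<forall>t<k. (f ^^ t) Y $ i = (f ^^ t) Y $ j"
    using equalize_coords[OF linear_f subspace_polyP iterate_in_polyP_krylov[OF y] w wij yij] by blast
  then have "krylov f Y k \<subseteq> ?P" "krylov f Y k \<subseteq> {v. v $ i = v $ j}"
    unfolding krylov_def by auto
  then have "polyP (krylov f Y k) \<subseteq> ?P \<inter> {v. v $ i = v $ j}"
    using polyP_minimal polyP_subset_diagonal by blast
  moreover have "(f ^^ (k - 1)) w \<in> ?P" by (rule w(1))
  ultimately show ?thesis using Y(2) wij by blast
qed

end

lemma multiple_of_constant_vector:
  fixes x u :: "'a::field ^ 'n"
  assumes "x \<noteq> 0" "\<And>i j. x $ i = x $ j" "\<And>i j. u $ i = u $ j"
  obtains c where "u = c *s x"
proof -
  have "x $ i \<noteq> 0" for i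
    using assms(1,2) by (metis vec_eq_iff zero_index)
  then have "u = (u $ i / x $ i) *s x" for i
    using assms(2,3) by (simp add: vec_eq_iff) (metis nonzero_eq_divide_eq)
  then show ?thesis using that by blast
qed

lemma subspace_dim_one_eq_span:
  assumes "vec.subspace J" "vec.dim J = 1"
  obtains x where "x \<in> J" "x \<noteq> 0" "J = vec.span {x}"
proof -
  obtain x where x: "x \<in> J" "x \<noteq> 0"
    using assms(2) vec.dim_eq_0[of J] by auto
  have "vec.span {x} = vec.span J"
    using x assms(2) by (intro vec.dim_eq_span) (auto simp: vec.dim_singleton)
  then have "J = vec.span {x}"
    using assms(1) vec.span_eq_iff by metis
  with x show ?thesis using that by blast
qed

lemma special_line_multiple:
  assumes special: "special_in E (vec.span {x})" and E: "vec.subspace E" and x: "x \<noteq> 0"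
    and u: "u \<in> E" "u \<in> polyP {x}"
  obtains c where "u = c *s x"
proof (cases "\<exists>i j. x $ i \<noteq> x $ j")
  case False
  then have x_const: "\<And>i j. x $ i = x $ j" by blast
  then have "\<And>i j. u $ i = u $ j" using u(2) unfolding polyP_eq by auto
  then show ?thesis using multiple_of_constant_vector[OF x x_const] that by blast
next
  case True
  then obtain i j where ij: "x $ i \<noteq> x $ j" by blast
  define a where "a = u $ i - u $ j"
  define b where "b = x $ i - x $ j"
  define z where "z = a *s x - b *s u"
  show ?thesis
  proof (cases "z = 0")
    case True
    then have "u = (a / b) *s x"
      using ij unfolding z_def b_def by (simp add: vec_eq_iff field_simps)
    then show ?thesis by (rule that)
  next
    case False
    have "x \<in> E" using special vec.span_superset unfolding special_in_def by blast
    then have "z \<in> E" unfolding z_def using E u(1) by (simp add: vec.subspace_diff vec.subspace_scale)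
    then have zE: "vec.span {z} \<subseteq> E" using E by (simp add: vec.span_minimal)
    have "z \<in> polyP {x}" unfolding z_def using u(2) polyP_superset[of "{x}"]
      by (intro vec.subspace_diff vec.subspace_scale subspace_polyP) auto
    then have "polyP (vec.span {z}) \<subseteq> polyP (vec.span {x})" by (simp add: polyP_minimal)
    moreover have "vec.dim (vec.span {z}) = vec.dim (vec.span {x})"
      using False x by (simp add: vec.dim_singleton)
    ultimately have "polyP (vec.span {z}) = polyP (vec.span {x})"
      using special zE vec.subspace_span unfolding special_in_def by blast
    then have "polyP {z} = polyP {x}" by simp
    moreover have "polyP {z} \<subseteq> {v. v $ i = v $ j}"
      by (rule polyP_subset_diagonal) (simp add: z_def a_def b_def algebra_simps)
    moreover have "x \<in> polyP {x}" using polyP_superset by blast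
    ultimately show ?thesis using ij by blast
  qed
qed

lemma linear_shifted: "Vector_Spaces.linear (*s) (*s) (shifted A lam)"
  unfolding shifted_def
  by (intro vec.linear_compose_sub matrix_vector_mul_linear_gen vec.linear_scale_self)

lemma subspace_Nspace: "vec.subspace (Nspace A lam k)"
  unfolding Nspace_def
  by (intro vec.subspace_inter vec.linear_subspace_kernel[OF linear_shifted]
      vec.linear_subspace_image[OF linear_iterate[OF linear_shifted] vec.subspace_UNIV])

lemma jordan_chain_nth:
  assumes chain: "jordan_chain A lam us" and i: "i < length us"
  shows "us ! i = (shifted A lam ^^ (length us - 1 - i)) (last us)"
proof -
  have "us \<noteq> []" using chain unfolding jordan_chain_def by blast
  from i have "i \<le> length us - 1" by simp
  then show ?thesis
  proof (induction i rule: inc_induct)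
    case base
    show ?case using \<open>us \<noteq> []\<close> by (simp add: last_conv_nth)
  next
    case (step n)
    have "us ! n = shifted A lam (us ! Suc n)"
      using chain step.hyps unfolding jordan_chain_def by auto
    also have "\<dots> = (shifted A lam ^^ Suc (length us - 1 - Suc n)) (last us)"
      using step.IH by simp
    also have "Suc (length us - 1 - Suc n) = length us - 1 - n"
      using step.hyps by simp
    finally show ?case .
  qed
qed

lemma jordan_subspace_span_krylov:
  assumes k: "1 \<le> k" and top: "(shifted A lam ^^ (k - 1)) y \<noteq> 0"
    and bottom: "(shifted A lam ^^ k) y = 0"
  shows "jordan_subspace A lam (vec.span (krylov (shifted A lam) y k))"
proof -
  let ?B = "shifted A lam"
  define xs where "xs = map (\<lambda>m. (?B ^^ (k - 1 - m)) y) [0..<k]"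
  have xs_nth: "xs ! m = (?B ^^ (k - 1 - m)) y" if "m < k" for m
    using that unfolding xs_def by simp
  have "(\<lambda>m. k - 1 - m) ` {..<k} = {..<k}"
  proof (intro equalityI subsetI)
    fix t assume "t \<in> {..<k}"
    then have "t = k - 1 - (k - 1 - t)" "k - 1 - t \<in> {..<k}" by auto
    then show "t \<in> (\<lambda>m. k - 1 - m) ` {..<k}" by blast
  qed auto
  moreover have "set xs = (\<lambda>t. (?B ^^ t) y) ` (\<lambda>m. k - 1 - m) ` {..<k}"
    unfolding xs_def by (simp add: image_image lessThan_atLeast0)
  ultimately have "set xs = krylov ?B y k"
    unfolding krylov_def by simp
  moreover have "jordan_chain A lam xs"
    unfolding jordan_chain_def
  proof (intro conjI allI impI ballI)
    show "xs \<noteq> []" using k unfolding xs_def by simp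
    have "(?B ^^ t) y \<noteq> 0" if "t < k" for t
    proof
      assume "(?B ^^ t) y = 0"
      from iterate_vanish_mono[OF linear_shifted this, of "k - 1"] that
      have "(?B ^^ (k - 1)) y = 0" by simp
      with top show False by simp
    qed
    then show "v \<noteq> 0" if "v \<in> set xs" for v using that unfolding xs_def by auto
    have "?B ((?B ^^ (k - 1)) y) = (?B ^^ Suc (k - 1)) y" by simp
    then show "?B (xs ! 0) = 0" using k bottom xs_nth[of 0] by simp
    fix i assume "0 < i \<and> i < length xs"
    then have i: "0 < i" "i < k" unfolding xs_def by auto
    have "?B (xs ! i) = (?B ^^ Suc (k - 1 - i)) y" using i xs_nth by simp
    also have "Suc (k - 1 - i) = k - 1 - (i - 1)" using i by auto
    also have "(?B ^^ (k - 1 - (i - 1))) y = xs ! (i - 1)" using i xs_nth by simp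
    finally show "?B (xs ! i) = xs ! (i - 1)" .
  qed
  ultimately show ?thesis unfolding jordan_subspace_def by metis
qed

lemma jordan_subspace_contains_chain:
  assumes U: "jordan_subspace A lam U" and k: "1 \<le> k" "k \<le> vec.dim U"
  obtains w where "\<And>t. (shifted A lam ^^ t) w \<in> U" "(shifted A lam ^^ k) w = 0"
    "(shifted A lam ^^ (k - 1)) w \<noteq> 0"
proof -
  let ?B = "shifted A lam"
  obtain us where chain: "jordan_chain A lam us" and Uus: "U = vec.span (set us)"
    using U unfolding jordan_subspace_def by auto
  define L where "L = length us"
  have "k \<le> L"
    using k(2) vec.dim_le_card'[of "set us"] card_length[of us] unfolding Uus L_def by simp
  have us0: "us ! 0 \<noteq> 0" "?B (us ! 0) = 0" "us ! 0 = (?B ^^ (L - 1)) (last us)"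
    using chain jordan_chain_nth[OF chain, of 0] unfolding jordan_chain_def L_def by auto
  define w where "w = (?B ^^ (L - k)) (last us)"
  have w_iterate: "(?B ^^ t) w = (?B ^^ (t + (L - k))) (last us)" for t
    unfolding w_def by (simp add: funpow_add)
  have top: "(?B ^^ (k - 1)) w = us ! 0"
    using k \<open>k \<le> L\<close> us0(3) unfolding w_iterate by (simp add: algebra_simps)
  have bottom: "(?B ^^ k) w = 0"
    using top us0(2) unfolding funpow_eq_apply_pred[OF k(1)] by simp
  have w_in_U: "(?B ^^ t) w \<in> U" for t
  proof (cases "t < k")
    case True
    then have "(?B ^^ t) w = us ! (k - 1 - t)"
      using jordan_chain_nth[OF chain, of "k - 1 - t"] \<open>k \<le> L\<close> unfolding w_iterate L_def
      by (simp add: algebra_simps)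
    moreover have "us ! (k - 1 - t) \<in> set us"
      using \<open>k \<le> L\<close> True unfolding L_def by simp
    ultimately show ?thesis
      unfolding Uus using vec.span_superset by auto
  next
    case False
    then have "(?B ^^ t) w = 0"
      using iterate_vanish_mono[OF linear_shifted bottom] by simp
    then show ?thesis
      unfolding Uus by (simp add: vec.span_zero)
  qed
  show ?thesis
    using top us0(1) by (intro that[OF w_in_U bottom]) simp
qed

lemma Nspace_preimage_vanish:
  assumes "(shifted A lam ^^ (k - 1)) y \<in> Nspace A lam k" "1 \<le> k"
  shows "(shifted A lam ^^ k) y = 0"
  using assms(1) unfolding funpow_eq_apply_pred[OF assms(2)] Nspace_def by simp

lemma exists_krylov_smaller_polyP:
  assumes special: "special_in (Nspace A lam k) (vec.span {x})" and x: "x \<noteq> 0" and k: "1 \<le> k"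
    and y: "(shifted A lam ^^ (k - 1)) y = x"
    and w: "\<And>t. (shifted A lam ^^ t) w \<in> polyP U" "(shifted A lam ^^ k) w = 0"
      "(shifted A lam ^^ (k - 1)) w \<noteq> 0"
    and smaller: "polyP U \<subset> polyP (krylov (shifted A lam) y k)"
  shows "\<exists>Y. (shifted A lam ^^ (k - 1)) Y = x \<and>
    polyP (krylov (shifted A lam) Y k) \<subset> polyP (krylov (shifted A lam) y k)"
proof -
  let ?B = "shifted A lam"
  define u where "u = (?B ^^ (k - 1)) w"
  have "x \<in> Nspace A lam k"
    using special vec.span_superset unfolding special_in_def by blast
  then have bottom: "(?B ^^ k) y = 0"
    using Nspace_preimage_vanish[where y=y] y k by simp
  show ?thesis
  proof (cases "u \<in> polyP {x}")
    case False
    then obtain i j where uij: "u $ i \<noteq> u $ j"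
      and yij: "(?B ^^ (k - 1)) y $ i = (?B ^^ (k - 1)) y $ j"
      unfolding polyP_eq y by auto
    have "(?B ^^ t) w \<in> polyP (krylov ?B y k)" for t
      using w(1) smaller by blast
    from polyP_krylov_shrinks_by_equalizing[OF linear_shifted bottom this w(2) uij[unfolded u_def] yij]
    show ?thesis unfolding y .
  next
    case True
    have "?B u = 0" using w(2) unfolding u_def funpow_eq_apply_pred[OF k] .
    then have "u \<in> Nspace A lam k" unfolding Nspace_def u_def by simp
    then obtain c where c: "u = c *s x"
      using special_line_multiple[OF special subspace_Nspace x _ True] by blast
    then have "c \<noteq> 0" using w(3) unfolding u_def by auto
    define Y where "Y = (1 / c) *s w"
    have "(?B ^^ (k - 1)) Y = x"
      unfolding Y_def iterate_scale[OF linear_shifted] u_def[symmetric] c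
      using \<open>c \<noteq> 0\<close> by (simp add: vector_smult_assoc)
    moreover have "krylov ?B Y k \<subseteq> polyP U"
      unfolding krylov_def Y_def iterate_scale[OF linear_shifted]
      using w(1) by (auto intro: vec.subspace_scale subspace_polyP)
    then have "polyP (krylov ?B Y k) \<subset> polyP (krylov ?B y k)"
      using polyP_minimal smaller by blast
    ultimately show ?thesis by blast
  qed
qed

lemma special_jordan_subspace_minimal_krylov:
  assumes special: "special_in (Nspace A lam k) (vec.span {x})" and x: "x \<noteq> 0" and k: "1 \<le> k"
    and y: "(shifted A lam ^^ (k - 1)) y = x"
    and minimal: "\<And>Y. (shifted A lam ^^ (k - 1)) Y = x \<Longrightarrow>
      vec.dim (polyP (krylov (shifted A lam) y k)) \<le> vec.dim (polyP (krylov (shifted A lam) Y k))"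
  shows "special_jordan_subspace A lam (vec.span (krylov (shifted A lam) y k))"
proof -
  let ?B = "shifted A lam" and ?W = "vec.span (krylov (shifted A lam) y k)"
  have "x \<in> Nspace A lam k"
    using special vec.span_superset unfolding special_in_def by blast
  then have bottom: "(?B ^^ k) y = 0" using Nspace_preimage_vanish[where y=y] y k by simp
  have top: "(?B ^^ (k - 1)) y \<noteq> 0" using x y by simp
  have "polyP U = polyP ?W"
    if U: "jordan_subspace A lam U" "vec.dim U = vec.dim ?W" "polyP U \<subseteq> polyP ?W" for U
  proof (rule ccontr)
    assume "polyP U \<noteq> polyP ?W"
    with U(3) have smaller: "polyP U \<subset> polyP (krylov ?B y k)" by auto
    have "k \<le> vec.dim U" using U(2) dim_span_krylov[OF linear_shifted k top bottom] by simp
    then obtain w where "\<And>t. (?B ^^ t) w \<in> U" "(?B ^^ k) w = 0" "(?B ^^ (k - 1)) w \<noteq> 0"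
      using jordan_subspace_contains_chain[OF U(1) k] by blast
    then obtain Y where Y: "(?B ^^ (k - 1)) Y = x" "polyP (krylov ?B Y k) \<subset> polyP (krylov ?B y k)"
      using exists_krylov_smaller_polyP[OF special x k y _ _ _ smaller] polyP_superset by blast
    from dim_polyP_psubset[OF Y(2)] minimal[OF Y(1)] show False by simp
  qed
  then show ?thesis
    unfolding special_jordan_subspace_def
    using jordan_subspace_span_krylov[OF k top bottom] by blast
qed

theorem mainTheorem5:
  fixes A :: "nat^'n^'n" and lam :: complex and l k :: nat and J1 :: "(complex^'n) set"
  assumes "regular_network A"
    and "\<exists>x. x \<noteq> 0 \<and> cmat A *v x = lam *s x"
    and "l = vec.dim (gen_eigenspace A lam)" and "l \<ge> 1"
    and "1 \<le> k" and "k \<le> l"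
    and "vec.subspace J1" and "J1 \<subseteq> Nspace A lam k" and "vec.dim J1 = 1"
    and "special_in (Nspace A lam k) J1"
  shows "\<exists>W. special_jordan_subspace A lam W \<and> vec.dim W = k \<and>
             W \<subseteq> gen_eigenspace A lam \<and> J1 \<subseteq> W"
proof -
  let ?B = "shifted A lam"
  obtain x where x: "x \<in> J1" "x \<noteq> 0" and J1: "J1 = vec.span {x}"
    using subspace_dim_one_eq_span[OF assms(7,9)] .
  obtain y0 where "(?B ^^ (k - 1)) y0 = x"
    using x assms(8) unfolding Nspace_def by auto
  then obtain y where y: "(?B ^^ (k - 1)) y = x" and minimal: "\<And>Y. (?B ^^ (k - 1)) Y = x \<Longrightarrow>
      vec.dim (polyP (krylov ?B y k)) \<le> vec.dim (polyP (krylov ?B Y k))"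
    using ex_has_least_nat[of "\<lambda>Y. (?B ^^ (k - 1)) Y = x" y0 "\<lambda>Y. vec.dim (polyP (krylov ?B Y k))"]
    by blast
  have bottom: "(?B ^^ k) y = 0"
    using Nspace_preimage_vanish[where y=y] y x assms(5,8) by auto
  have top: "(?B ^^ (k - 1)) y \<noteq> 0" using x y by simp
  show ?thesis
  proof (intro exI conjI)
    show "special_jordan_subspace A lam (vec.span (krylov ?B y k))"
      by (rule special_jordan_subspace_minimal_krylov[OF assms(10)[unfolded J1] x(2) assms(5) y minimal])
    show "vec.dim (vec.span (krylov ?B y k)) = k"
      by (rule dim_span_krylov[OF linear_shifted assms(5) top bottom])
    show "vec.span (krylov ?B y k) \<subseteq> gen_eigenspace A lam"
      using span_krylov_subset_kernel[OF linear_shifted bottom] unfolding gen_eigenspace_def by blast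
    show "J1 \<subseteq> vec.span (krylov ?B y k)"
      unfolding J1 using iterate_in_krylov[of "k - 1" k] y assms(5)
      by (intro vec.span_mono) auto
  qed
qed

end
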